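(* Let the non-degeneracy, balanced communication and periodic strong connectivity assumptions hold, and let the positive step-sizes of the DLPDS algorithm satisfy $\lim_{k\to\infty}\alpha(k)=0$, $\sum_k\alpha(k)=+\infty$, $\sum_k\alpha(k)^2<+\infty$. Suppose $x^*\in X$ and $\mu^*\in M$ satisfy $\lim_{k\to\infty}x^{[i]}(k)=x^*$ and $\lim_{k\to\infty}\mu^{[i]}(k)=\mu^*$ for all $i\in V$. Then $(x^*,\mu^* )$ is a saddle point of $\mathcal{L}(x,\mu)=f(x)+N\mu^Tg(x)$ over $X\times M$, i.e. $\mathcal{L}(x^*,\mu)\le\mathcal{L}(x^*,\mu^* )\le\mathcal{L}(x,\mu^* )$ for all $x\in X$, $\mu\in M$.
   Context: Same setting and DLPDS algorithm as follows. Agents $V=\{1,\dots,N\}$; convex $f^{[i]}$, $f=\sum_if^{[i]}$; nonempty compact convex $X^{[i]}$, $X=\bigcap_iX^{[i]}$; $g:\mathbb{R}^n\to\mathbb{R}^m$ with convex components; $M^{[i]}=\{\mu\in\mathbb{R}^m_{\ge0}:\|\mu\|\le\rho_i\}$, $\rho_i>0$, $M=\bigcap_iM^{[i]}$; $\mathcal{L}^{[i]}(x,\mu)=f^{[i]}(x)+\mu^Tg(x)$. Weights $a^i_j(k)\ge0$ satisfying non-degeneracy ($a^i_i(k)\ge\eta>0$, $a^i_j(k)\in\{0\}\cup[\eta,1]$), double stochasticity, and periodic strong connectivity (union of edge sets $\{(j,i):j\neq i,a^i_j(k)>0\}$ over any $B$ consecutive times is strongly connected). Iteration: $v^{[i]}_x(k)=\sum_ja^i_j(k)x^{[j]}(k)$,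 $v^{[i]}_\mu(k)=\sum_ja^i_j(k)\mu^{[j]}(k)$, $x^{[i]}(k+1)=P_{X^{[i]}}[v^{[i]}_x(k)-\alpha(k)\mathcal{D}^{[i]}_x(k)]$, $\mu^{[i]}(k+1)=P_{M^{[i]}}[v^{[i]}_\mu(k)+\alpha(k)g(v^{[i]}_x(k))]$, with $x^{[i]}(0)\in X^{[i]}$, $\mu^{[i]}(0)\ge0$, and $\mathcal{D}^{[i]}_x(k)$ a subgradient of $\mathcal{L}^{[i]}(\cdot,v^{[i]}_\mu(k))$ at $v^{[i]}_x(k)$. *)

theory Defs
  imports "HOL-Analysis.Analysis"
begin

definition is_subgradient :: "('a::real_inner \<Rightarrow> real) \<Rightarrow> 'a \<Rightarrow> 'a \<Rightarrow> bool" where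
  "is_subgradient h x d \<longleftrightarrow> (\<forall>y. h y \<ge> h x + d \<bullet> (y - x))"

definition nonneg_orthant :: "(real^'m) set" where
  "nonneg_orthant = {mu. \<forall>j. 0 \<le> mu $ j}"

abbreviation proj :: "('a::euclidean_space) set \<Rightarrow> 'a \<Rightarrow> 'a" where
  "proj S y \<equiv> closest_point S y"

end

theory Submission
  imports Defs
begin

(* Both halves of the saddle-point inequality are proved by the same argument.
   Fix a comparison point w in every local constraint set and track the
   Lyapunov quantity V k = sum_i |z_i(k) - w|^2, where z is either the primal or
   the dual iterate. Projection onto a convex set containing w is nonexpansive
   and doubly stochastic mixing cannot increase V, so
       V (k+1) <= V k + alpha k * sum_i e_i(k),
   where e_i(k) is a "drift" term converging to some E_i. If sum_i E_i < 0, V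
   decreases by a fixed multiple of alpha k eventually, contradicting V >= 0 and
   the divergence of sum_k alpha k. Hence sum_i E_i >= 0 (lemma
   consensus_projection_drift_nonneg). Specialised to the dual ascent step this
   gives maximality of mustar, specialised to the primal subgradient step (with
   bounded subgradients) it gives minimality of xstar; the main theorem merely
   checks the hypotheses of these two specialisations. *)

section \<open>Doubly stochastic mixing\<close>

definition doubly_stochastic :: "nat \<Rightarrow> (nat \<Rightarrow> nat \<Rightarrow> real) \<Rightarrow> bool" where
  "doubly_stochastic N A \<longleftrightarrow>
     (\<forall>i<N. \<forall>j<N. 0 \<le> A i j) \<and> (\<forall>i<N. (\<Sum>j<N. A i j) = 1) \<and> (\<forall>j<N. (\<Sum>i<N. A i j) = 1)"

lemma stochastic_mix_centered:
  fixes y :: "nat \<Rightarrow> 'a::real_vector"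
  assumes "(\<Sum>j<N. c j) = 1"
  shows "(\<Sum>j<N. c j *\<^sub>R y j) - w = (\<Sum>j<N. c j *\<^sub>R (y j - w))"
proof -
  have "(\<Sum>j<N. c j *\<^sub>R (y j - w)) = (\<Sum>j<N. c j *\<^sub>R y j) - (\<Sum>j<N. c j) *\<^sub>R w"
    by (simp add: scaleR_diff_right sum_subtractf scaleR_sum_left)
  then show ?thesis using assms by simp
qed

lemma stochastic_mix_tendsto:
  fixes y :: "nat \<Rightarrow> nat \<Rightarrow> 'a::real_normed_vector"
  assumes c_nonneg: "\<And>j k. j < N \<Longrightarrow> 0 \<le> c j k"
    and c_sum: "\<And>k. (\<Sum>j<N. c j k) = 1"
    and lim: "\<And>j. j < N \<Longrightarrow> (\<lambda>k. y j k) \<longlonglongrightarrow> l"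
  shows "(\<lambda>k. \<Sum>j<N. c j k *\<^sub>R y j k) \<longlonglongrightarrow> l"
proof -
  have c_le_one: "c j k \<le> 1" if "j < N" for j k
    using member_le_sum[of j "{..<N}" "\<lambda>j. c j k"] c_nonneg c_sum that by auto
  have bound: "norm ((\<Sum>j<N. c j k *\<^sub>R y j k) - l) \<le> (\<Sum>j<N. norm (y j k - l))" for k
  proof -
    have "norm ((\<Sum>j<N. c j k *\<^sub>R y j k) - l) \<le> (\<Sum>j<N. norm (c j k *\<^sub>R (y j k - l)))"
      unfolding stochastic_mix_centered[OF c_sum] by (rule norm_sum)
    also have "\<dots> \<le> (\<Sum>j<N. norm (y j k - l))"
      using c_nonneg c_le_one by (intro sum_mono) (auto intro: mult_left_le_one_le)
    finally show ?thesis .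
  qed
  have "(\<lambda>k. (\<Sum>j<N. c j k *\<^sub>R y j k) - l) \<longlonglongrightarrow> 0"
  proof (rule Lim_null_comparison)
    show "\<forall>\<^sub>F k in sequentially. norm ((\<Sum>j<N. c j k *\<^sub>R y j k) - l) \<le> (\<Sum>j<N. norm (y j k - l))"
      using bound by simp
    have "(\<lambda>k. \<Sum>j<N. norm (y j k - l)) \<longlonglongrightarrow> (\<Sum>j<N. norm (l - l))"
      by (intro tendsto_intros) (auto intro: lim)
    then show "(\<lambda>k. \<Sum>j<N. norm (y j k - l)) \<longlonglongrightarrow> 0" by simp
  qed
  then show ?thesis by (simp add: LIM_zero_iff)
qed

text \<open>Doubly stochastic mixing does not increase the sum of squared norms
  (Jensen's inequality row by row, then the column sums).\<close>
lemma doubly_stochastic_sq_norm_sum: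
  fixes y :: "nat \<Rightarrow> 'a::real_normed_vector"
  assumes "doubly_stochastic N A"
  shows "(\<Sum>i<N. (norm (\<Sum>j<N. A i j *\<^sub>R y j))\<^sup>2) \<le> (\<Sum>j<N. (norm (y j))\<^sup>2)"
proof -
  have nonneg: "\<And>i j. i < N \<Longrightarrow> j < N \<Longrightarrow> 0 \<le> A i j"
    and row: "\<And>i. i < N \<Longrightarrow> (\<Sum>j<N. A i j) = 1"
    and col: "\<And>j. j < N \<Longrightarrow> (\<Sum>i<N. A i j) = 1"
    using assms unfolding doubly_stochastic_def by auto
  have row_bound: "(norm (\<Sum>j<N. A i j *\<^sub>R y j))\<^sup>2 \<le> (\<Sum>j<N. A i j * (norm (y j))\<^sup>2)"
    if i: "i < N" for i
  proof -
    have "norm (\<Sum>j<N. A i j *\<^sub>R y j) \<le> (\<Sum>j<N. norm (A i j *\<^sub>R y j))" by (rule norm_sum)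
    also have "\<dots> = (\<Sum>j<N. A i j *\<^sub>R norm (y j))" using nonneg i by (intro sum.cong) auto
    finally have "(norm (\<Sum>j<N. A i j *\<^sub>R y j))\<^sup>2 \<le> (\<Sum>j<N. A i j *\<^sub>R norm (y j))\<^sup>2"
      by (intro power_mono) auto
    also have "\<dots> \<le> (\<Sum>j<N. A i j * (norm (y j))\<^sup>2)"
      using convex_on_sum[where S="{..<N}" and f="\<lambda>t::real. t\<^sup>2" and C=UNIV and a="A i"
          and y="\<lambda>j. norm (y j)", OF _ _ convex_power_even] i nonneg row by auto
    finally show ?thesis .
  qed
  have "(\<Sum>i<N. (norm (\<Sum>j<N. A i j *\<^sub>R y j))\<^sup>2) \<le> (\<Sum>i<N. \<Sum>j<N. A i j * (norm (y j))\<^sup>2)"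
    by (rule sum_mono) (use row_bound in auto)
  also have "\<dots> = (\<Sum>j<N. (\<Sum>i<N. A i j) * (norm (y j))\<^sup>2)"
    by (subst sum.swap) (simp add: sum_distrib_right)
  also have "\<dots> = (\<Sum>j<N. (norm (y j))\<^sup>2)" by (intro sum.cong) (auto simp: col)
  finally show ?thesis .
qed

lemma doubly_stochastic_sq_dist_sum:
  fixes y :: "nat \<Rightarrow> 'a::real_normed_vector"
  assumes "doubly_stochastic N A"
  shows "(\<Sum>i<N. (norm ((\<Sum>j<N. A i j *\<^sub>R y j) - w))\<^sup>2) \<le> (\<Sum>j<N. (norm (y j - w))\<^sup>2)"
proof -
  have "(\<Sum>i<N. (norm ((\<Sum>j<N. A i j *\<^sub>R y j) - w))\<^sup>2)
        = (\<Sum>i<N. (norm (\<Sum>j<N. A i j *\<^sub>R (y j - w)))\<^sup>2)"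
    using assms unfolding doubly_stochastic_def by (intro sum.cong) (auto simp: stochastic_mix_centered)
  also have "\<dots> \<le> (\<Sum>j<N. (norm (y j - w))\<^sup>2)" by (rule doubly_stochastic_sq_norm_sum[OF assms])
  finally show ?thesis .
qed

section \<open>The common descent argument\<close>

text \<open>One projected step from v in direction q, measured against a point w of the
  closed convex target set: nonexpansiveness of the projection plus expansion
  of the square.\<close>
lemma projected_step_sq_dist:
  fixes S :: "'a::euclidean_space set"
  assumes "closed S" "convex S" "w \<in> S"
  shows "(norm (closest_point S (v + t *\<^sub>R q) - w))\<^sup>2
           \<le> (norm (v - w))\<^sup>2 + t * (2 * (q \<bullet> (v - w)) + t * (norm q)\<^sup>2)"
proof -
  have "norm (closest_point S (v + t *\<^sub>R q) - w) \<le> norm ((v - w) + t *\<^sub>R q)"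
    using closest_point_lipschitz[OF assms(2,1), of "v + t *\<^sub>R q" w]
      closest_point_self[OF assms(3)] assms(3) by (auto simp: dist_norm algebra_simps)
  then have "(norm (closest_point S (v + t *\<^sub>R q) - w))\<^sup>2 \<le> (norm ((v - w) + t *\<^sub>R q))\<^sup>2"
    by (intro power_mono) auto
  also have "\<dots> = (norm (v - w))\<^sup>2 + t * (2 * (q \<bullet> (v - w)) + t * (norm q)\<^sup>2)"
    unfolding power2_norm_eq_inner
    by (simp add: inner_add inner_commute algebra_simps power2_eq_square)
  finally show ?thesis .
qed

lemma no_uniform_descent:
  fixes V \<alpha> :: "nat \<Rightarrow> real"
  assumes descent: "\<And>k. k \<ge> K \<Longrightarrow> V (Suc k) \<le> V k - \<alpha> k * c"
    and c_pos: "c > 0" and V_nonneg: "\<And>k. V k \<ge> 0" and alpha_pos: "\<And>k. \<alpha> k > 0"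
  shows "summable \<alpha>"
proof -
  have telescope: "V (K + n) \<le> V K - c * (\<Sum>k<n. \<alpha> (k + K))" for n
  proof (induction n)
    case (Suc n)
    then show ?case using descent[of "K + n"] by (simp add: algebra_simps)
  qed simp
  have "summable (\<lambda>k. \<alpha> (k + K))"
  proof (rule bounded_imp_summable)
    show "0 \<le> \<alpha> (n + K)" for n using alpha_pos[of "n + K"] by simp
    show "(\<Sum>k\<le>n. \<alpha> (k + K)) \<le> V K / c" for n
      using telescope[of "Suc n"] V_nonneg[of "K + Suc n"] c_pos
      by (simp add: lessThan_Suc_atMost field_simps)
  qed
  then show ?thesis by (simp add: summable_iff_shift)
qed

text \<open>The core estimate: for a projected consensus iteration whose per-agent
  drift terms are bounded above by sequences converging to E i, the total
  limiting drift is nonnegative (otherwise the squared distance to w would have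
  to decrease without bound).\<close>
lemma consensus_projection_drift_nonneg:
  fixes z v q :: "nat \<Rightarrow> nat \<Rightarrow> 'a::euclidean_space"
  assumes mixing: "\<And>k. doubly_stochastic N (\<lambda>i j. a i j k)"
    and v_def: "\<And>i k. i < N \<Longrightarrow> v i k = (\<Sum>j<N. a i j k *\<^sub>R z j k)"
    and S_closed: "\<And>i. i < N \<Longrightarrow> closed (S i)"
    and S_convex: "\<And>i. i < N \<Longrightarrow> convex (S i)"
    and w_in: "\<And>i. i < N \<Longrightarrow> w \<in> S i"
    and step: "\<And>i k. i < N \<Longrightarrow> z i (Suc k) = closest_point (S i) (v i k + \<alpha> k *\<^sub>R q i k)"
    and drift: "\<And>i k. i < N \<Longrightarrow> 2 * (q i k \<bullet> (v i k - w)) + \<alpha> k * (norm (q i k))\<^sup>2 \<le> e i k"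
    and drift_lim: "\<And>i. i < N \<Longrightarrow> (\<lambda>k. e i k) \<longlonglongrightarrow> E i"
    and alpha_pos: "\<And>k. \<alpha> k > 0" and alpha_div: "\<not> summable \<alpha>"
  shows "0 \<le> (\<Sum>i<N. E i)"
proof (rule ccontr)
  assume "\<not> 0 \<le> (\<Sum>i<N. E i)"
  then have neg: "(\<Sum>i<N. E i) < 0" by simp
  define V where "V k = (\<Sum>i<N. (norm (z i k - w))\<^sup>2)" for k
  have "(\<lambda>k. \<Sum>i<N. e i k) \<longlonglongrightarrow> (\<Sum>i<N. E i)" using drift_lim by (intro tendsto_sum) auto
  moreover have "(\<Sum>i<N. E i) < (\<Sum>i<N. E i) / 2" using neg by simp
  ultimately have "\<forall>\<^sub>F k in sequentially. (\<Sum>i<N. e i k) < (\<Sum>i<N. E i) / 2"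
    by (rule order_tendstoD(2))
  then obtain K where K: "\<And>k. k \<ge> K \<Longrightarrow> (\<Sum>i<N. e i k) < (\<Sum>i<N. E i) / 2"
    unfolding eventually_sequentially by blast
  have mixed: "(\<Sum>i<N. (norm (v i k - w))\<^sup>2) \<le> V k" for k
  proof -
    have "(\<Sum>i<N. (norm (v i k - w))\<^sup>2) = (\<Sum>i<N. (norm ((\<Sum>j<N. a i j k *\<^sub>R z j k) - w))\<^sup>2)"
      by (intro sum.cong) (auto simp: v_def)
    also have "\<dots> \<le> V k" unfolding V_def by (rule doubly_stochastic_sq_dist_sum[OF mixing])
    finally show ?thesis .
  qed
  have "V (Suc k) \<le> V k - \<alpha> k * (- (\<Sum>i<N. E i) / 2)" if k: "k \<ge> K" for k
  proof -
    have "V (Suc k) \<le> (\<Sum>i<N. (norm (v i k - w))\<^sup>2 + \<alpha> k * e i k)"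
      unfolding V_def
    proof (rule sum_mono)
      fix i assume "i \<in> {..<N}"
      then have i: "i < N" by simp
      have "(norm (z i (Suc k) - w))\<^sup>2
            \<le> (norm (v i k - w))\<^sup>2 + \<alpha> k * (2 * (q i k \<bullet> (v i k - w)) + \<alpha> k * (norm (q i k))\<^sup>2)"
        unfolding step[OF i]
        by (rule projected_step_sq_dist[OF S_closed[OF i] S_convex[OF i] w_in[OF i]])
      also have "\<dots> \<le> (norm (v i k - w))\<^sup>2 + \<alpha> k * e i k"
        using drift[OF i, of k] alpha_pos[of k] by (intro add_left_mono mult_left_mono) auto
      finally show "(norm (z i (Suc k) - w))\<^sup>2 \<le> (norm (v i k - w))\<^sup>2 + \<alpha> k * e i k" .
    qed
    also have "\<dots> = (\<Sum>i<N. (norm (v i k - w))\<^sup>2) + \<alpha> k * (\<Sum>i<N. e i k)"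
      by (simp add: sum.distrib sum_distrib_left)
    also have "\<dots> \<le> V k + \<alpha> k * ((\<Sum>i<N. E i) / 2)"
      using mixed[of k] K[OF k] alpha_pos[of k] by (intro add_mono mult_left_mono) auto
    finally show ?thesis by simp
  qed
  then have "summable \<alpha>"
    by (rule no_uniform_descent) (use neg alpha_pos in \<open>auto simp: V_def intro: sum_nonneg\<close>)
  with alpha_div show False by contradiction
qed

section \<open>The dual step: the limit multiplier maximises the Lagrangian\<close>

lemma consensus_ascent_limit_optimal:
  fixes z v q :: "nat \<Rightarrow> nat \<Rightarrow> 'a::euclidean_space"
  assumes N_pos: "N \<ge> 1"
    and mixing: "\<And>k. doubly_stochastic N (\<lambda>i j. a i j k)"
    and v_def: "\<And>i k. i < N \<Longrightarrow> v i k = (\<Sum>j<N. a i j k *\<^sub>R z j k)"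
    and S_closed: "\<And>i. i < N \<Longrightarrow> closed (S i)"
    and S_convex: "\<And>i. i < N \<Longrightarrow> convex (S i)"
    and w_in: "\<And>i. i < N \<Longrightarrow> w \<in> S i"
    and step: "\<And>i k. i < N \<Longrightarrow> z i (Suc k) = closest_point (S i) (v i k + \<alpha> k *\<^sub>R q i k)"
    and v_lim: "\<And>i. i < N \<Longrightarrow> (\<lambda>k. v i k) \<longlonglongrightarrow> m"
    and q_lim: "\<And>i. i < N \<Longrightarrow> (\<lambda>k. q i k) \<longlonglongrightarrow> qstar"
    and alpha_pos: "\<And>k. \<alpha> k > 0" and alpha_lim: "\<alpha> \<longlonglongrightarrow> 0" and alpha_div: "\<not> summable \<alpha>"
  shows "w \<bullet> qstar \<le> m \<bullet> qstar"
proof -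
  have "0 \<le> (\<Sum>i<N. 2 * (qstar \<bullet> (m - w)))"
  proof (rule consensus_projection_drift_nonneg
      [OF mixing v_def S_closed S_convex w_in step order_refl _ alpha_pos alpha_div])
    fix i assume i: "i < N"
    have "(\<lambda>k. 2 * (q i k \<bullet> (v i k - w)) + \<alpha> k * (norm (q i k))\<^sup>2)
          \<longlonglongrightarrow> 2 * (qstar \<bullet> (m - w)) + 0 * (norm qstar)\<^sup>2"
      by (intro tendsto_intros v_lim[OF i] q_lim[OF i] alpha_lim)
    then show "(\<lambda>k. 2 * (q i k \<bullet> (v i k - w)) + \<alpha> k * (norm (q i k))\<^sup>2)
          \<longlonglongrightarrow> 2 * (qstar \<bullet> (m - w))" by simp
  qed
  then have "0 \<le> qstar \<bullet> (m - w)" using N_pos by (simp add: zero_le_mult_iff)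
  then show ?thesis by (simp add: inner_diff_right inner_commute)
qed

section \<open>The primal step: the limit point minimises the Lagrangian\<close>

lemma subgradient_norm_bound:
  fixes h :: "'a::real_inner \<Rightarrow> real"
  assumes sg: "is_subgradient h x d" and bound: "\<And>y. norm (y - x) \<le> 1 \<Longrightarrow> \<bar>h y\<bar> \<le> F"
  shows "norm d \<le> 2 * F"
proof (cases "d = 0")
  case True
  then show ?thesis using bound[of x] by simp
next
  case False
  define y where "y = x + (1 / norm d) *\<^sub>R d"
  have "norm (y - x) \<le> 1" using False by (simp add: y_def)
  moreover have "d \<bullet> (y - x) = norm d"
    using False by (simp add: y_def power2_norm_eq_inner[symmetric] power2_eq_square)
  moreover have "h y \<ge> h x + d \<bullet> (y - x)" using sg unfolding is_subgradient_def by blast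
  moreover have "\<bar>h x\<bar> \<le> F" "\<bar>h y\<bar> \<le> F" using bound \<open>norm (y - x) \<le> 1\<close> by auto
  ultimately show ?thesis by linarith
qed

text \<open>Subgradients of the local Lagrangians at bounded points with bounded
  multipliers stay bounded, because continuous functions are bounded on balls.\<close>
lemma lagrangian_subgradients_bounded:
  fixes \<phi> :: "'a::euclidean_space \<Rightarrow> real" and \<psi> :: "'a \<Rightarrow> 'b::real_inner"
  assumes \<phi>_cont: "continuous_on UNIV \<phi>" and \<psi>_cont: "continuous_on UNIV \<psi>"
    and v_bdd: "Bseq v" and m_bdd: "Bseq m"
    and sg: "\<And>k. is_subgradient (\<lambda>y. \<phi> y + m k \<bullet> \<psi> y) (v k) (d k)"
  shows "Bseq d"
proof -
  obtain R where R: "\<And>k. norm (v k) \<le> R" using v_bdd by (metis BseqE)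
  obtain Mu where Mu: "\<And>k. norm (m k) \<le> Mu" using m_bdd by (metis BseqE)
  have "bounded (\<phi> ` cball 0 (R + 1))" "bounded (\<psi> ` cball 0 (R + 1))"
    using \<phi>_cont \<psi>_cont by (auto intro!: compact_imp_bounded compact_continuous_image
        intro: continuous_on_subset)
  then obtain F G where F: "\<And>y. y \<in> cball 0 (R + 1) \<Longrightarrow> norm (\<phi> y) \<le> F"
    and G: "\<And>y. y \<in> cball 0 (R + 1) \<Longrightarrow> norm (\<psi> y) \<le> G"
    unfolding bounded_iff by (meson imageI)
  have "norm (d k) \<le> 2 * (F + Mu * G)" for k
  proof (rule subgradient_norm_bound[OF sg])
    fix y assume "norm (y - v k) \<le> 1"
    then have y: "y \<in> cball 0 (R + 1)"
      using norm_triangle_sub[of y "v k"] R[of k] by simp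
    have "\<bar>m k \<bullet> \<psi> y\<bar> \<le> norm (m k) * norm (\<psi> y)" by (rule Cauchy_Schwarz_ineq2)
    also have "\<dots> \<le> Mu * G"
      using Mu[of k] G[OF y] norm_ge_zero[of "m k"] norm_ge_zero[of "\<psi> y"]
      by (intro mult_mono) linarith+
    finally have "\<bar>m k \<bullet> \<psi> y\<bar> \<le> Mu * G" .
    moreover have "\<bar>\<phi> y\<bar> \<le> F" using F[OF y] by simp
    ultimately show "\<bar>\<phi> y + m k \<bullet> \<psi> y\<bar> \<le> F + Mu * G"
      using abs_triangle_ineq[of "\<phi> y" "m k \<bullet> \<psi> y"] by linarith
  qed
  then show ?thesis by (intro BseqI') blast
qed

lemma consensus_descent_limit_optimal:
  fixes z v D :: "nat \<Rightarrow> nat \<Rightarrow> 'a::euclidean_space" and h :: "nat \<Rightarrow> nat \<Rightarrow> 'a \<Rightarrow> real"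
  assumes mixing: "\<And>k. doubly_stochastic N (\<lambda>i j. a i j k)"
    and v_def: "\<And>i k. i < N \<Longrightarrow> v i k = (\<Sum>j<N. a i j k *\<^sub>R z j k)"
    and S_closed: "\<And>i. i < N \<Longrightarrow> closed (S i)"
    and S_convex: "\<And>i. i < N \<Longrightarrow> convex (S i)"
    and w_in: "\<And>i. i < N \<Longrightarrow> w \<in> S i"
    and subgrad: "\<And>i k. i < N \<Longrightarrow> is_subgradient (h i k) (v i k) (D i k)"
    and D_bdd: "\<And>i. i < N \<Longrightarrow> Bseq (D i)"
    and step: "\<And>i k. i < N \<Longrightarrow> z i (Suc k) = closest_point (S i) (v i k - \<alpha> k *\<^sub>R D i k)"
    and at_w: "\<And>i. i < N \<Longrightarrow> (\<lambda>k. h i k w) \<longlonglongrightarrow> hw i"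
    and at_v: "\<And>i. i < N \<Longrightarrow> (\<lambda>k. h i k (v i k)) \<longlonglongrightarrow> hv i"
    and alpha_pos: "\<And>k. \<alpha> k > 0" and alpha_lim: "\<alpha> \<longlonglongrightarrow> 0" and alpha_div: "\<not> summable \<alpha>"
  shows "(\<Sum>i<N. hv i) \<le> (\<Sum>i<N. hw i)"
proof -
  have step': "z i (Suc k) = closest_point (S i) (v i k + \<alpha> k *\<^sub>R (- D i k))" if "i < N" for i k
    using step[OF that] by simp
  have vanishing: "(\<lambda>k. \<alpha> k * (norm (D i k))\<^sup>2) \<longlonglongrightarrow> 0" if i: "i < N" for i
  proof -
    obtain C where C: "\<And>k. norm (D i k) \<le> C" using D_bdd[OF i] by (metis BseqE)
    show ?thesis
    proof (rule Lim_null_comparison)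
      have "norm (\<alpha> k * (norm (D i k))\<^sup>2) \<le> \<alpha> k * C\<^sup>2" for k
        using power_mono[OF C[of k] norm_ge_zero] alpha_pos[of k] by (simp add: abs_mult)
      then show "\<forall>\<^sub>F k in sequentially. norm (\<alpha> k * (norm (D i k))\<^sup>2) \<le> \<alpha> k * C\<^sup>2" by simp
      show "(\<lambda>k. \<alpha> k * C\<^sup>2) \<longlonglongrightarrow> 0" using tendsto_mult_left_zero[OF alpha_lim] by simp
    qed
  qed
  have "0 \<le> (\<Sum>i<N. 2 * (hw i - hv i))"
  proof (rule consensus_projection_drift_nonneg
      [OF mixing v_def S_closed S_convex w_in step' _ _ alpha_pos alpha_div])
    fix i k assume i: "i < N"
    have "h i k w \<ge> h i k (v i k) + D i k \<bullet> (w - v i k)"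
      using subgrad[OF i, of k] unfolding is_subgradient_def by blast
    then show "2 * (- D i k \<bullet> (v i k - w)) + \<alpha> k * (norm (- D i k))\<^sup>2
               \<le> 2 * (h i k w - h i k (v i k)) + \<alpha> k * (norm (D i k))\<^sup>2"
      by (simp add: inner_diff_right)
  next
    fix i assume i: "i < N"
    have "(\<lambda>k. 2 * (h i k w - h i k (v i k)) + \<alpha> k * (norm (D i k))\<^sup>2)
          \<longlonglongrightarrow> 2 * (hw i - hv i) + 0"
      by (intro tendsto_add tendsto_mult_left tendsto_diff at_w[OF i] at_v[OF i] vanishing[OF i])
    then show "(\<lambda>k. 2 * (h i k w - h i k (v i k)) + \<alpha> k * (norm (D i k))\<^sup>2)
          \<longlonglongrightarrow> 2 * (hw i - hv i)" by simp
  qed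
  then show ?thesis by (simp add: sum_subtractf sum_distrib_left[symmetric])
qed

lemma nonneg_orthant_closed: "closed (nonneg_orthant :: (real^'m) set)"
  unfolding nonneg_orthant_def by (intro closed_Collect_all closed_Collect_le continuous_intros)

lemma nonneg_orthant_convex: "convex (nonneg_orthant :: (real^'m) set)"
  unfolding convex_def nonneg_orthant_def by auto

text \<open>A local multiplier set is an orthant intersected with a ball, hence closed
  and convex, so projecting onto it is nonexpansive.\<close>
lemma multiplier_set_eq: "{mu \<in> (nonneg_orthant :: (real^'m) set). norm mu \<le> r} = nonneg_orthant \<inter> cball 0 r"
  by auto

text \<open>A vector-valued map with convex (hence continuous) components is continuous.\<close>
lemma convex_components_continuous:
  fixes g :: "real^'n \<Rightarrow> real^'m"
  assumes "\<And>l. convex_on UNIV (\<lambda>y. g y $ l)"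
  shows "continuous_on UNIV g"
proof -
  have "continuous_on UNIV (\<lambda>y. \<chi> l. g y $ l)"
    by (intro continuous_on_vec_lambda allI convex_on_continuous) (use assms in auto)
  then show ?thesis by simp
qed

theorem mainTheorem8:
  fixes N :: nat and B :: nat and \<eta> :: real
    and f :: "nat \<Rightarrow> real^'n \<Rightarrow> real"
    and Xs :: "nat \<Rightarrow> (real^'n) set"
    and g :: "real^'n \<Rightarrow> real^'m"
    and \<rho> :: "nat \<Rightarrow> real"
    and a :: "nat \<Rightarrow> nat \<Rightarrow> nat \<Rightarrow> real"
    and \<alpha> :: "nat \<Rightarrow> real"
    and x :: "nat \<Rightarrow> nat \<Rightarrow> real^'n"
    and \<mu> :: "nat \<Rightarrow> nat \<Rightarrow> real^'m"
    and D :: "nat \<Rightarrow> nat \<Rightarrow> real^'n"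
    and xstar :: "real^'n" and mustar :: "real^'m"
  defines "X \<equiv> (\<Inter>i<N. Xs i)"
    and "Ms \<equiv> (\<lambda>i. {mu \<in> nonneg_orthant. norm mu \<le> \<rho> i})"
  defines "M \<equiv> (\<Inter>i<N. Ms i)"
    and "vx \<equiv> (\<lambda>i k. \<Sum>j<N. a i j k *\<^sub>R x j k)"
    and "vmu \<equiv> (\<lambda>i k. \<Sum>j<N. a i j k *\<^sub>R \<mu> j k)"
    and "L \<equiv> (\<lambda>xx mu. (\<Sum>i<N. f i xx) + real N * (mu \<bullet> g xx))"
  assumes N_pos: "N \<ge> 1"
    and f_convex: "\<And>i. i < N \<Longrightarrow> convex_on UNIV (f i)"
    and X_compact: "\<And>i. i < N \<Longrightarrow> compact (Xs i)"
    and X_convex: "\<And>i. i < N \<Longrightarrow> convex (Xs i)"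
    and X_nonempty: "\<And>i. i < N \<Longrightarrow> Xs i \<noteq> {}"
    and g_convex: "\<And>l. convex_on UNIV (\<lambda>y. g y $ l)"
    and rho_pos: "\<And>i. i < N \<Longrightarrow> \<rho> i > 0"
    \<comment> \<open>non-degeneracy\<close>
    and eta_pos: "\<eta> > 0"
    and a_nonneg: "\<And>i j k. i < N \<Longrightarrow> j < N \<Longrightarrow> a i j k \<ge> 0"
    and a_diag: "\<And>i k. i < N \<Longrightarrow> a i i k \<ge> \<eta>"
    and a_range: "\<And>i j k. i < N \<Longrightarrow> j < N \<Longrightarrow> a i j k = 0 \<or> (\<eta> \<le> a i j k \<and> a i j k \<le> 1)"
    \<comment> \<open>balanced communication (double stochasticity)\<close>
    and a_row: "\<And>i k. i < N \<Longrightarrow> (\<Sum>j<N. a i j k) = 1"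
    and a_col: "\<And>j k. j < N \<Longrightarrow> (\<Sum>i<N. a i j k) = 1"
    \<comment> \<open>periodic strong connectivity\<close>
    and B_pos: "B \<ge> 1"
    and strong_conn: "\<And>k. \<forall>i<N. \<forall>j<N. (i, j) \<in>
         {(j', i'). j' < N \<and> i' < N \<and> j' \<noteq> i' \<and> (\<exists>s\<in>{k..<k+B}. a i' j' s > 0)}\<^sup>*"
    \<comment> \<open>step sizes\<close>
    and alpha_pos: "\<And>k. \<alpha> k > 0"
    and alpha_lim: "\<alpha> \<longlonglongrightarrow> 0"
    and alpha_not_summable: "\<not> summable \<alpha>"
    and alpha_sq_summable: "summable (\<lambda>k. (\<alpha> k)\<^sup>2)"
    \<comment> \<open>DLPDS algorithm\<close>
    and x_init: "\<And>i. i < N \<Longrightarrow> x i 0 \<in> Xs i"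
    and mu_init: "\<And>i. i < N \<Longrightarrow> \<mu> i 0 \<in> nonneg_orthant"
    and D_subgrad: "\<And>i k. i < N \<Longrightarrow>
         is_subgradient (\<lambda>y. f i y + vmu i k \<bullet> g y) (vx i k) (D i k)"
    and x_step: "\<And>i k. i < N \<Longrightarrow>
         x i (Suc k) = closest_point (Xs i) (vx i k - \<alpha> k *\<^sub>R D i k)"
    and mu_step: "\<And>i k. i < N \<Longrightarrow>
         \<mu> i (Suc k) = closest_point (Ms i) (vmu i k + \<alpha> k *\<^sub>R g (vx i k))"
    \<comment> \<open>convergence to a common limit\<close>
    and xstar_in: "xstar \<in> X"
    and mustar_in: "mustar \<in> M"
    and x_lim: "\<And>i. i < N \<Longrightarrow> (\<lambda>k. x i k) \<longlonglongrightarrow> xstar"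
    and mu_lim: "\<And>i. i < N \<Longrightarrow> (\<lambda>k. \<mu> i k) \<longlonglongrightarrow> mustar"
  shows "(\<forall>mu\<in>M. L xstar mu \<le> L xstar mustar) \<and> (\<forall>xx\<in>X. L xstar mustar \<le> L xx mustar)"
proof -
  have mixing: "doubly_stochastic N (\<lambda>i j. a i j k)" for k
    unfolding doubly_stochastic_def using a_nonneg a_row a_col by blast
  have vx_lim: "(\<lambda>k. vx i k) \<longlonglongrightarrow> xstar" and vmu_lim: "(\<lambda>k. vmu i k) \<longlonglongrightarrow> mustar"
    if i: "i < N" for i
    unfolding vx_def vmu_def using a_nonneg[OF i] a_row[OF i] x_lim mu_lim
    by (auto intro!: stochastic_mix_tendsto[where c="\<lambda>j k. a i j k"])
  have f_cont: "continuous_on UNIV (f i)" if "i < N" for i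
    using f_convex[OF that] by (intro convex_on_continuous) auto
  have g_cont: "continuous_on UNIV g" using g_convex by (rule convex_components_continuous)
  have Ms_closed: "closed (Ms i)" and Ms_convex: "convex (Ms i)" for i
    unfolding Ms_def multiplier_set_eq
    by (intro closed_Int convex_Int nonneg_orthant_closed nonneg_orthant_convex closed_cball convex_cball)+
  have dual: "w \<bullet> g xstar \<le> mustar \<bullet> g xstar" if "w \<in> M" for w
    using that N_pos mixing Ms_closed Ms_convex mu_step vmu_lim alpha_pos alpha_lim alpha_not_summable
      continuous_on_tendsto_compose[OF g_cont vx_lim]
    unfolding M_def by (intro consensus_ascent_limit_optimal[where z=\<mu> and v=vmu and S=Ms])
      (auto simp: vmu_def)
  have primal: "(\<Sum>i<N. f i xstar + mustar \<bullet> g xstar) \<le> (\<Sum>i<N. f i xx + mustar \<bullet> g xx)"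
    if "xx \<in> X" for xx
  proof (rule consensus_descent_limit_optimal[where z=x and v=vx and S=Xs and D=D and \<alpha>=\<alpha>,
        OF mixing _ compact_imp_closed[OF X_compact] X_convex _ D_subgrad _ x_step])
    fix i assume i: "i < N"
    show "Bseq (D i)"
      by (rule lagrangian_subgradients_bounded[OF f_cont[OF i] g_cont _ _ D_subgrad[OF i]])
        (use vx_lim[OF i] vmu_lim[OF i] convergent_imp_Bseq convergentI in blast)+
    show "(\<lambda>k. f i xx + vmu i k \<bullet> g xx) \<longlonglongrightarrow> f i xx + mustar \<bullet> g xx"
      by (intro tendsto_intros vmu_lim[OF i])
    show "(\<lambda>k. f i (vx i k) + vmu i k \<bullet> g (vx i k)) \<longlonglongrightarrow> f i xstar + mustar \<bullet> g xstar"
      by (intro tendsto_intros vmu_lim[OF i] continuous_on_tendsto_compose[OF f_cont[OF i] vx_lim[OF i]]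
          continuous_on_tendsto_compose[OF g_cont vx_lim[OF i]]) auto
  qed (use that alpha_pos alpha_lim alpha_not_summable in \<open>auto simp: X_def vx_def\<close>)
  show ?thesis
    using dual primal by (auto simp: L_def sum.distrib intro: mult_left_mono)
qed

end
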